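(* Let $R$ be a $*$-ring and equip the power series ring $R[[x]]$ with the involution $(\sum_{i\ge0}a_ix^i)^*=\sum_{i\ge0}a_i^*x^i$. Then $R[[x]]$ is $*$-clean if and only if $R$ is $*$-clean.
   Context: A $*$-ring is a ring with identity with an involution $*$. A projection is $p$ with $p^2=p=p^*$. A $*$-ring is $*$-clean if every element is a sum of a projection and a unit. *)

theory Defs
  imports "HOL-Computational_Algebra.Formal_Power_Series"
begin

definition star_ring :: "('a::ring_1 \<Rightarrow> 'a) \<Rightarrow> bool" where
  "star_ring s \<longleftrightarrow> (\<forall>a b. s (a + b) = s a + s b) \<and> (\<forall>a b. s (a * b) = s b * s a)
                   \<and> (\<forall>a. s (s a) = a)"

definition is_projection :: "('a::ring_1 \<Rightarrow> 'a) \<Rightarrow> 'a \<Rightarrow> bool" where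
  "is_projection s p \<longleftrightarrow> p * p = p \<and> s p = p"

definition is_unit_ring :: "'a::ring_1 \<Rightarrow> bool" where
  "is_unit_ring u \<longleftrightarrow> (\<exists>v. u * v = 1 \<and> v * u = 1)"

definition star_clean :: "('a::ring_1 \<Rightarrow> 'a) \<Rightarrow> bool" where
  "star_clean s \<longleftrightarrow> (\<forall>a. \<exists>p u. is_projection s p \<and> is_unit_ring u \<and> a = p + u)"

definition fps_star :: "('a::ring_1 \<Rightarrow> 'a) \<Rightarrow> 'a fps \<Rightarrow> 'a fps" where
  "fps_star s f = Abs_fps (\<lambda>n. s (fps_nth f n))"

end

theory Submission
  imports Defs
begin

text \<open>Taking constant terms is a *-preserving ring homomorphism \<open>R[[x]] \<rightarrow> R\<close>, so a
  *-clean decomposition \<open>P + U\<close> of a constant series yields one of its constant term.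
  Conversely, a power series is a unit as soon as its constant term is, so writing
  \<open>f $ 0 = p + u\<close> gives \<open>f = p + (f - p)\<close> with the constant projection \<open>p\<close>.\<close>

unbundle fps_syntax

lemma fps_star_nth [simp]: "fps_star s f $ n = s (f $ n)"
  by (simp add: fps_star_def)

lemma star_ring_zero:
  assumes "star_ring s"
  shows "s 0 = 0"
proof -
  have "s (0 + 0) = s 0 + s 0" using assms unfolding star_ring_def by blast
  then show ?thesis by simp
qed

text \<open>Coefficients of a right inverse in the noncommutative setting, where the library's
  \<open>inverse\<close> on \<open>fps\<close> is unavailable: \<open>w\<close> is a right inverse of \<open>f $ 0\<close>, and the
  recursion makes coefficient \<open>n > 0\<close> of the product vanish.\<close>
function fps_right_inverse_nth :: "'a::ring_1 fps \<Rightarrow> 'a \<Rightarrow> nat \<Rightarrow> 'a" where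
  "fps_right_inverse_nth f w n =
     (if n = 0 then w
      else - w * (\<Sum>i\<in>{1..n}. f $ i * fps_right_inverse_nth f w (n - i)))"
  by auto
termination by (relation "measure (\<lambda>(f, w, n). n)") auto

declare fps_right_inverse_nth.simps [simp del]

lemma fps_right_inverse:
  fixes f :: "'a::ring_1 fps"
  assumes "f $ 0 * w = 1"
  shows "f * Abs_fps (fps_right_inverse_nth f w) = 1"
proof (rule fps_ext)
  fix n
  let ?g = "fps_right_inverse_nth f w"
  show "(f * Abs_fps ?g) $ n = 1 $ n"
  proof (cases "n = 0")
    case True
    then show ?thesis using assms by (simp add: fps_mult_nth fps_right_inverse_nth.simps)
  next
    case False
    define S where "S = (\<Sum>i\<in>{1..n}. f $ i * ?g (n - i))"
    have "(f * Abs_fps ?g) $ n = f $ 0 * ?g n + S"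
      unfolding S_def by (simp add: fps_mult_nth sum.atLeast_Suc_atMost)
    also have "?g n = - w * S"
      using False unfolding S_def by (simp add: fps_right_inverse_nth.simps)
    also have "f $ 0 * (- w * S) + S = 0"
      by (simp add: mult.assoc [symmetric] assms)
    finally show ?thesis using False by simp
  qed
qed

lemma is_unit_ring_fps_iff:
  fixes f :: "'a::ring_1 fps"
  shows "is_unit_ring f \<longleftrightarrow> is_unit_ring (f $ 0)"
proof
  assume "is_unit_ring f"
  then obtain g where "f * g = 1" "g * f = 1" unfolding is_unit_ring_def by blast
  then have "(f * g) $ 0 = 1" "(g * f) $ 0 = 1" by simp_all
  then show "is_unit_ring (f $ 0)" unfolding is_unit_ring_def by (auto simp: fps_mult_nth)
next
  assume "is_unit_ring (f $ 0)"
  then obtain w where w: "f $ 0 * w = 1" "w * f $ 0 = 1" unfolding is_unit_ring_def by blast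
  define g where "g = Abs_fps (fps_right_inverse_nth f w)"
  have fg: "f * g = 1" unfolding g_def by (rule fps_right_inverse [OF w(1)])
  have "g $ 0 = w" by (simp add: g_def fps_right_inverse_nth.simps)
  then obtain h where gh: "g * h = 1" using fps_right_inverse [of g "f $ 0"] w(2) by blast
  text \<open>\<open>g\<close> has the right inverse \<open>h\<close> and the left inverse \<open>f\<close>, so they coincide.\<close>
  have "f = h" by (metis fg gh mult.assoc mult_1_left mult_1_right)
  with fg gh show "is_unit_ring f" unfolding is_unit_ring_def by blast
qed

lemma is_projection_fps_nth_0:
  assumes "is_projection (fps_star s) P"
  shows "is_projection s (P $ 0)"
proof -
  have "(P * P) $ 0 = P $ 0" "fps_star s P $ 0 = P $ 0"
    using assms unfolding is_projection_def by auto
  then show ?thesis unfolding is_projection_def by (simp add: fps_mult_nth)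
qed

lemma is_projection_fps_const:
  assumes "star_ring s" and "is_projection s p"
  shows "is_projection (fps_star s) (fps_const p)"
proof -
  have "fps_star s (fps_const p) = fps_const p"
    using assms star_ring_zero [OF assms(1)] unfolding is_projection_def
    by (intro fps_ext) auto
  moreover have "fps_const p * fps_const p = fps_const p"
    using assms(2) unfolding is_projection_def by (simp add: fps_const_mult [symmetric])
  ultimately show ?thesis unfolding is_projection_def by simp
qed

lemma star_clean_of_star_clean_fps:
  assumes "star_clean (fps_star s)"
  shows "star_clean s"
  unfolding star_clean_def
proof
  fix a
  obtain P U where PU: "is_projection (fps_star s) P" "is_unit_ring U" "fps_const a = P + U"
    using assms unfolding star_clean_def by blast
  have "a = P $ 0 + U $ 0" using arg_cong [OF PU(3), of "\<lambda>f. f $ 0"] by simp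
  with PU(1,2) show "\<exists>p u. is_projection s p \<and> is_unit_ring u \<and> a = p + u"
    by (metis is_projection_fps_nth_0 is_unit_ring_fps_iff)
qed

lemma star_clean_fps:
  assumes "star_ring s" and "star_clean s"
  shows "star_clean (fps_star s)"
  unfolding star_clean_def
proof
  fix f :: "'a fps"
  obtain p u where pu: "is_projection s p" "is_unit_ring u" "f $ 0 = p + u"
    using assms(2) unfolding star_clean_def by blast
  have "is_projection (fps_star s) (fps_const p)"
    using is_projection_fps_const [OF assms(1) pu(1)] .
  moreover have "is_unit_ring (f - fps_const p)"
    using pu(2,3) by (simp add: is_unit_ring_fps_iff)
  ultimately show "\<exists>P U. is_projection (fps_star s) P \<and> is_unit_ring U \<and> f = P + U"
    by (metis add.commute diff_add_cancel)
qed

theorem proposition2p8: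
  fixes s :: "'a::ring_1 \<Rightarrow> 'a"
  assumes "star_ring s"
  shows "star_clean (fps_star s) \<longleftrightarrow> star_clean s"
  using assms star_clean_fps star_clean_of_star_clean_fps by blast

end
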